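(* For $n=m=1$, consider the system $F_1=\sum_{i,j\in\{0,1\}}a_{ij}x_iy_j=0$, $F_2=\sum_{i,j\in\{0,1\}}b_{ij}x_iy_j=0$ on $\mathbb{P}^1\times\mathbb{P}^1$ with indeterminate coefficients. Up to sign, its discriminant equals \[\left(\det\begin{pmatrix}a_{00}&a_{01}\\ b_{10}&b_{11}\end{pmatrix}-\det\begin{pmatrix}a_{10}&a_{11}\\ b_{00}&b_{01}\end{pmatrix}\right)\left(\det\begin{pmatrix}a_{00}&a_{10}\\ b_{01}&b_{11}\end{pmatrix}-\det\begin{pmatrix}a_{01}&a_{11}\\ b_{00}&b_{10}\end{pmatrix}\right)-4\det\begin{pmatrix}a_{00}&a_{01}\\ a_{10}&a_{11}\end{pmatrix}\det\begin{pmatrix}b_{00}&b_{01}\\ b_{10}&b_{11}\end{pmatrix}.\] Moreover this polynomial lies in the product ideal $I_1I_2$, where $I_1$ is the ideal generated by the $2\times2$ minors of the $4\times2$ matrix with rows $(a_{00},a_{01}),(a_{10},a_{11}),(b_{00},b_{01}),(b_{10},b_{11})$, and $I_2$ is the ideal generated by the $2\times2$ minors of the $4\times2$ matrix with rows $(a_{00},a_{10}),(a_{01},a_{11}),(b_{00},b_{10}),(b_{01},b_{11})$.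
   Context: The discriminant of a system of two bilinear equations on $\mathbb{P}^1\times\mathbb{P}^1$ is the irreducible polynomial (with coprime integer coefficients, defined up to sign) in the coefficients which vanishes whenever the system has a multiple (singular) common solution over $\mathbb{C}$, i.e. a common zero at which the $2\times2$ Jacobian with respect to the affine coordinates is singular. *)

theory Defs
  imports "HOL-Analysis.Derivative" "HOL-Library.Poly_Mapping" "HOL-Library.Numeral_Type"
    "HOL-Computational_Algebra.Factorial_Ring"
begin

text \<open>Integer polynomials in the eight coefficient indeterminates
  a00,a01,a10,a11,b00,b01,b10,b11, indexed by the numeral type 8:
  the coefficient of x_i y_j in F_(k+1) has index 4k+2i+j (k=0 for a, k=1 for b).\<close>

type_synonym ipoly = "(8 \<Rightarrow>\<^sub>0 nat) \<Rightarrow>\<^sub>0 int"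

definition cidx :: "nat \<Rightarrow> nat \<Rightarrow> nat \<Rightarrow> 8" where
  "cidx k i j = of_nat (4 * k + 2 * i + j)"

definition Var :: "8 \<Rightarrow> ipoly" where
  "Var v = Poly_Mapping.single (Poly_Mapping.single v 1) 1"

definition cvar :: "nat \<Rightarrow> nat \<Rightarrow> nat \<Rightarrow> ipoly" where
  "cvar k i j = Var (cidx k i j)"

definition eval :: "ipoly \<Rightarrow> (8 \<Rightarrow> complex) \<Rightarrow> complex" where
  "eval p c = (\<Sum>m\<in>Poly_Mapping.keys p.
      of_int (Poly_Mapping.lookup p m) * (\<Prod>v\<in>UNIV. c v ^ Poly_Mapping.lookup m v))"

definition F :: "(8 \<Rightarrow> complex) \<Rightarrow> nat \<Rightarrow> (nat \<Rightarrow> complex) \<Rightarrow> (nat \<Rightarrow> complex) \<Rightarrow> complex" where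
  "F c k x y = (\<Sum>i<2. \<Sum>j<2. c (cidx k i j) * x i * y j)"

definition chart :: "nat \<Rightarrow> complex \<Rightarrow> nat \<Rightarrow> complex" where
  "chart p s = (\<lambda>i. if i = p then 1 else s)"

text \<open>The system has a multiple (singular) common solution in P^1 x P^1:
  in some affine chart (p,q) of P^1 x P^1 there is a common zero (s,t) of the
  dehomogenised equations at which their 2x2 Jacobian w.r.t. (s,t) is singular.
  The charts p,q in {0,1} cover P^1 x P^1.\<close>
definition has_multiple_solution :: "(8 \<Rightarrow> complex) \<Rightarrow> bool" where
  "has_multiple_solution c \<longleftrightarrow>
     (\<exists>p<2. \<exists>q<2. \<exists>s t.
        (let f = (\<lambda>k s t. F c k (chart p s) (chart q t)) in
          f 0 s t = 0 \<and> f 1 s t = 0 \<and>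
          deriv (\<lambda>s'. f 0 s' t) s * deriv (\<lambda>t'. f 1 s t') t
          - deriv (\<lambda>t'. f 0 s t') t * deriv (\<lambda>s'. f 1 s' t) s = 0))"

definition vanishes_on_multiple :: "ipoly \<Rightarrow> bool" where
  "vanishes_on_multiple Q \<longleftrightarrow> (\<forall>c. has_multiple_solution c \<longrightarrow> eval Q c = 0)"

text \<open>D is a discriminant: an irreducible integer polynomial (hence with coprime
  coefficients) vanishing whenever the system has a multiple solution; the
  discriminant being "the" such polynomial up to sign, every other irreducible
  polynomial with this property is \<plusminus>D.\<close>
definition is_discriminant :: "ipoly \<Rightarrow> bool" where
  "is_discriminant D \<longleftrightarrow> irreducible D \<and> vanishes_on_multiple D \<and>
     (\<forall>Q. irreducible Q \<and> vanishes_on_multiple Q \<longrightarrow> Q = D \<or> Q = - D)"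

definition ideal_span :: "ipoly set \<Rightarrow> ipoly set" where
  "ideal_span S = {\<Sum>g\<in>G. h g * g | G h. finite G \<and> G \<subseteq> S}"

definition ideal_prod :: "ipoly set \<Rightarrow> ipoly set \<Rightarrow> ipoly set" where
  "ideal_prod I J = ideal_span {x * y | x y. x \<in> I \<and> y \<in> J}"

definition det2 :: "ipoly \<Rightarrow> ipoly \<Rightarrow> ipoly \<Rightarrow> ipoly \<Rightarrow> ipoly" where
  "det2 p q r s = p * s - q * r"

text \<open>Row u (u<4) of the first 4x2 matrix: (a00,a01),(a10,a11),(b00,b01),(b10,b11).\<close>
definition M1 :: "nat \<Rightarrow> nat \<Rightarrow> ipoly" where
  "M1 u col = cvar (u div 2) (u mod 2) col"

text \<open>Row u (u<4) of the second 4x2 matrix: (a00,a10),(a01,a11),(b00,b10),(b01,b11).\<close>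
definition M2 :: "nat \<Rightarrow> nat \<Rightarrow> ipoly" where
  "M2 u col = cvar (u div 2) col (u mod 2)"

definition minors_ideal :: "(nat \<Rightarrow> nat \<Rightarrow> ipoly) \<Rightarrow> ipoly set" where
  "minors_ideal M = ideal_span {det2 (M u 0) (M u 1) (M v 0) (M v 1) | u v. u < v \<and> v < 4}"

definition disc_poly :: ipoly where
  "disc_poly =
    (det2 (cvar 0 0 0) (cvar 0 0 1) (cvar 1 1 0) (cvar 1 1 1)
       - det2 (cvar 0 1 0) (cvar 0 1 1) (cvar 1 0 0) (cvar 1 0 1))
  * (det2 (cvar 0 0 0) (cvar 0 1 0) (cvar 1 0 1) (cvar 1 1 1)
       - det2 (cvar 0 0 1) (cvar 0 1 1) (cvar 1 0 0) (cvar 1 1 0))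
  - 4 * det2 (cvar 0 0 0) (cvar 0 0 1) (cvar 0 1 0) (cvar 0 1 1)
      * det2 (cvar 1 0 0) (cvar 1 0 1) (cvar 1 1 0) (cvar 1 1 1)"

end

theory Submission
  imports Defs "HOL-Computational_Algebra.Polynomial_Factorial"
begin

text \<open>Polynomials in the eight coefficients are identified with nested univariate polynomials,
  with a00 as outermost variable, which form a factorial ring. There the discriminant is the
  quadratic b11^2 a00^2 + disc1 a00 + disc0 in a00. It is irreducible because b11 is prime and
  does not divide disc0, and disc1^2 - 4 b11^2 disc0 is not a square. It vanishes at every system with a
  singular common zero: some member l F1 + m F2 of the pencil is then singular at that zero,
  which makes (l, m) a double root of the binary form det (l A + m B), whose discriminant is the
  given polynomial. Conversely, for generic values of the other seven coefficients there are two
  values of a00 giving a singular common zero, so a polynomial vanishing on all such systems has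
  zero pseudo-remainder modulo the discriminant and is divisible by it. Membership in I1 I2 is
  the identity disc = (m1_03 - m1_12) (m2_03 - m2_12) - 4 m1_01 m2_23 between 2x2 minors.\<close>

locale comm_ring_hom =
  fixes hom :: "'a::comm_ring_1 \<Rightarrow> 'b::comm_ring_1"
  assumes hom_add[simp]: "hom (x + y) = hom x + hom y"
    and hom_mult[simp]: "hom (x * y) = hom x * hom y"
    and hom_one[simp]: "hom 1 = 1"
begin

lemma hom_zero[simp]: "hom 0 = 0"
  using hom_add[of 0 0] by simp

lemma hom_uminus[simp]: "hom (- x) = - hom x"
  using hom_add[of x "- x"] by (simp add: eq_neg_iff_add_eq_0 add.commute)

lemma hom_diff[simp]: "hom (x - y) = hom x - hom y"
  using hom_add[of x "- y"] by simp

lemma hom_power[simp]: "hom (x ^ n) = hom x ^ n"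
  by (induct n) auto

lemma hom_sum[simp]: "hom (sum f A) = (\<Sum>i\<in>A. hom (f i))"
  by (induct A rule: infinite_finite_induct) auto

lemma hom_prod[simp]: "hom (prod f A) = (\<Prod>i\<in>A. hom (f i))"
  by (induct A rule: infinite_finite_induct) auto

lemma hom_of_nat[simp]: "hom (of_nat n) = of_nat n"
  by (induct n) auto

lemma hom_of_int[simp]: "hom (of_int k) = of_int k"
  by (cases k) simp_all

lemma hom_numeral[simp]: "hom (numeral n) = numeral n"
  using hom_of_nat[of "numeral n"] by simp

lemma hom_poly: "hom (poly p x) = poly (map_poly hom p) (hom x)"
  by (induct p) (simp_all add: map_poly_pCons)

lemma map_poly_hom_add: "map_poly hom (p + q) = map_poly hom p + map_poly hom q"
  by (intro poly_eqI) (simp add: coeff_map_poly)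

lemma map_poly_hom_mult: "map_poly hom (p * q) = map_poly hom p * map_poly hom q"
  by (intro poly_eqI) (simp add: coeff_map_poly coeff_mult)

lemma comm_ring_hom_poly_map_poly: "comm_ring_hom (\<lambda>p. poly (map_poly hom p) x)"
  by unfold_locales (simp_all add: map_poly_hom_add map_poly_hom_mult)

end

lemma comm_ring_hom_bij_unit_iff:
  assumes "comm_ring_hom h" "bij h"
  shows "h a dvd 1 \<longleftrightarrow> a dvd 1"
proof
  interpret comm_ring_hom h by fact
  assume "h a dvd 1"
  then obtain v where "1 = h a * v" by (auto elim: dvdE)
  also have "v = h (inv h v)" using \<open>bij h\<close> by (simp add: bij_is_surj surj_f_inv_f)
  finally have "h 1 = h (a * inv h v)" by (simp only: hom_one hom_mult)
  hence "1 = a * inv h v" using \<open>bij h\<close> by (simp only: bij_is_inj inj_eq)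
  thus "a dvd 1" by (rule dvdI)
next
  interpret comm_ring_hom h by fact
  assume "a dvd 1"
  then obtain v where "1 = a * v" by (auto elim: dvdE)
  hence "1 = h a * h v" by (metis hom_mult hom_one)
  thus "h a dvd 1" by (rule dvdI)
qed

lemma comm_ring_hom_bij_irreducible:
  assumes "comm_ring_hom h" "bij h" "irreducible x"
  shows "irreducible (h x)"
proof (rule irreducibleI)
  interpret comm_ring_hom h by fact
  have inj: "h a = h b \<longleftrightarrow> a = b" for a b using \<open>bij h\<close> by (simp add: bij_is_inj inj_eq)
  have inv: "h (inv h a) = a" for a using \<open>bij h\<close> by (simp add: bij_is_surj surj_f_inv_f)
  note unit_iff = comm_ring_hom_bij_unit_iff[OF assms(1,2)]
  show "h x \<noteq> 0" using \<open>irreducible x\<close> inj[of x 0] by auto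
  show "\<not> h x dvd 1" using \<open>irreducible x\<close> unit_iff irreducible_not_unit by blast
  fix a b assume "h x = a * b"
  hence "x = inv h a * inv h b" by (simp add: inj[symmetric] inv)
  hence "inv h a dvd 1 \<or> inv h b dvd 1" using \<open>irreducible x\<close> by (auto simp: irreducible_def)
  thus "a dvd 1 \<or> b dvd 1" by (metis unit_iff inv)
qed

section \<open>Nested polynomials\<close>

text \<open>On the empty list the outermost variable is set to 0, which keeps evaluation a ring
  homomorphism commuting with homomorphisms for all lists.\<close>

definition nested_eval :: "('a::zero \<Rightarrow> 'r list \<Rightarrow> 'r) \<Rightarrow> 'a poly \<Rightarrow> 'r list \<Rightarrow> 'r::comm_ring_1" where
  "nested_eval E p xs = (case xs of
     [] \<Rightarrow> poly (map_poly (\<lambda>q. E q []) p) 0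
   | x # ys \<Rightarrow> poly (map_poly (\<lambda>q. E q ys) p) x)"

lemma nested_eval_Cons: "nested_eval E p (x # ys) = poly (map_poly (\<lambda>q. E q ys) p) x"
  by (simp add: nested_eval_def)

lemma nested_eval_0[simp]: "nested_eval E 0 xs = 0"
  by (simp add: nested_eval_def split: list.split)

lemma nested_eval_pCons[simp]:
  "E 0 ys = 0 \<Longrightarrow> nested_eval E (pCons a p) (x # ys) = E a ys + x * nested_eval E p (x # ys)"
  by (simp add: nested_eval_Cons map_poly_pCons)

lemma comm_ring_hom_nested_eval:
  assumes "\<And>ys. comm_ring_hom (\<lambda>q. E q ys)"
  shows "comm_ring_hom (\<lambda>p. nested_eval E p xs)"
  unfolding nested_eval_def
  by (cases xs) (simp_all add: comm_ring_hom.comm_ring_hom_poly_map_poly[OF assms])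

lemma nested_eval_map:
  assumes "comm_ring_hom h" and "\<And>ys. comm_ring_hom (\<lambda>q. E1 q ys)"
    and "\<And>q ys. h (E1 q ys) = E2 q (map h ys)"
  shows "h (nested_eval E1 p xs) = nested_eval E2 p (map h xs)"
proof -
  interpret h: comm_ring_hom h by fact
  have "E1 0 ys = 0" for ys using comm_ring_hom.hom_zero[OF assms(2)] .
  hence "map_poly h (map_poly (\<lambda>q. E1 q ys) p) = map_poly (\<lambda>q. E2 q (map h ys)) p" for ys
    by (subst map_poly_map_poly) (auto simp: assms(3) intro!: map_poly_cong)
  thus ?thesis by (cases xs) (simp_all add: nested_eval_def h.hom_poly)
qed

lemma nested_eval_1[simp]: "E 0 ys = 0 \<Longrightarrow> E 1 ys = 1 \<Longrightarrow> nested_eval E 1 (x # ys) = 1"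
  by (simp add: nested_eval_Cons one_pCons map_poly_pCons)

definition detects_zero :: "('a::zero \<Rightarrow> complex list \<Rightarrow> complex) \<Rightarrow> nat \<Rightarrow> bool" where
  "detects_zero E n \<longleftrightarrow> (\<forall>q. (\<forall>ys. length ys = n \<longrightarrow> E q ys = 0) \<longrightarrow> q = 0)"

lemma detects_zero_nested_eval:
  assumes "detects_zero E n" and "\<And>ys. E 0 ys = 0"
  shows "detects_zero (nested_eval E) (Suc n)"
  unfolding detects_zero_def
proof (intro allI impI poly_eqI)
  fix p i assume p: "\<forall>xs. length xs = Suc n \<longrightarrow> nested_eval E p xs = 0"
  have "E (coeff p i) ys = 0" if "length ys = n" for ys
  proof -
    have "poly (map_poly (\<lambda>q. E q ys) p) x = 0" for x
      using p that by (auto simp: nested_eval_Cons dest: spec[of _ "x # ys"])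
    hence "map_poly (\<lambda>q. E q ys) p = 0" using poly_all_0_iff_0 by blast
    thus ?thesis by (metis assms(2) coeff_0 coeff_map_poly)
  qed
  thus "coeff p i = coeff 0 i" using assms(1) by (simp add: detects_zero_def)
qed

definition const_eval :: "int \<Rightarrow> 'r list \<Rightarrow> 'r::comm_ring_1" where
  "const_eval k xs = of_int k"

type_synonym mpoly7 = "int poly poly poly poly poly poly poly"
type_synonym mpoly8 = "mpoly7 poly"

definition eval7 :: "mpoly7 \<Rightarrow> 'r list \<Rightarrow> 'r::comm_ring_1" where
  "eval7 = nested_eval (nested_eval (nested_eval (nested_eval (nested_eval (nested_eval
     (nested_eval const_eval))))))"

definition eval8 :: "mpoly8 \<Rightarrow> 'r list \<Rightarrow> 'r::comm_ring_1" where
  "eval8 = nested_eval eval7"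

lemma comm_ring_hom_const_eval: "comm_ring_hom (\<lambda>k. const_eval k ys)"
  by unfold_locales (simp_all add: const_eval_def)

lemma comm_ring_hom_eval7: "comm_ring_hom (\<lambda>p. eval7 p ys)"
  unfolding eval7_def by (intro comm_ring_hom_nested_eval comm_ring_hom_const_eval)

lemma comm_ring_hom_eval8: "comm_ring_hom (\<lambda>p. eval8 p ys)"
  unfolding eval8_def by (intro comm_ring_hom_nested_eval comm_ring_hom_eval7)

interpretation eval7: comm_ring_hom "\<lambda>p. eval7 p ys" for ys
  by (rule comm_ring_hom_eval7)

interpretation eval8: comm_ring_hom "\<lambda>p. eval8 p ys" for ys
  by (rule comm_ring_hom_eval8)

lemma eval7_map: "comm_ring_hom h \<Longrightarrow> h (eval7 p ys) = eval7 p (map h ys)"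
  unfolding eval7_def
  by (intro nested_eval_map comm_ring_hom_nested_eval comm_ring_hom_const_eval)
     (simp_all add: const_eval_def comm_ring_hom.hom_of_int)

lemma eval8_map: "comm_ring_hom h \<Longrightarrow> h (eval8 p ys) = eval8 p (map h ys)"
  unfolding eval8_def by (intro nested_eval_map comm_ring_hom_eval7 eval7_map)

lemma const_eval_0[simp]: "const_eval 0 ys = 0"
  by (simp add: const_eval_def)

lemma const_eval_1[simp]: "const_eval 1 ys = 1"
  by (simp add: const_eval_def)

lemma detects_zero_eval7: "detects_zero eval7 7"
proof -
  have "detects_zero const_eval 0" by (simp add: detects_zero_def const_eval_def)
  hence "detects_zero eval7 (Suc (Suc (Suc (Suc (Suc (Suc (Suc 0)))))))"
    unfolding eval7_def by (intro detects_zero_nested_eval) simp_all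
  thus ?thesis by (simp add: numeral_eq_Suc)
qed

lemma detects_zero_eval8: "detects_zero eval8 8"
  using detects_zero_nested_eval[OF detects_zero_eval7] by (simp add: eval8_def)

definition monomial_value :: "(8 \<Rightarrow> complex) \<Rightarrow> (8 \<Rightarrow>\<^sub>0 nat) \<Rightarrow> complex" where
  "monomial_value c m = (\<Prod>v\<in>UNIV. c v ^ Poly_Mapping.lookup m v)"

lemma monomial_value_add: "monomial_value c (m + n) = monomial_value c m * monomial_value c n"
  by (simp add: monomial_value_def lookup_add power_add prod.distrib)

lemma eval_single: "eval (Poly_Mapping.single m a) c = of_int a * monomial_value c m"
  by (simp add: eval_def monomial_value_def)

lemma eval_add: "eval (p + q) c = eval p c + eval q c"
  unfolding eval_def by (rule setsum_keys_plus_distrib) (simp_all add: distrib_right)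

lemma eval_diff: "eval (p - q) c = eval p c - eval q c"
  using eval_add[of "p - q" q c] by simp

lemma eval_zero: "eval 0 c = 0"
  by (simp add: eval_def)

lemma eval_mult: "eval (p * q) c = eval p c * eval q c"
  using subset_UNIV[of "Poly_Mapping.keys p"]
proof (induction p rule: frag_induction)
  case (one m)
  show ?case using subset_UNIV[of "Poly_Mapping.keys q"]
  proof (induction q rule: frag_induction)
    case (one n) show ?case by (simp add: mult_single eval_single monomial_value_add)
  qed (simp_all add: eval_zero right_diff_distrib eval_diff)
qed (simp_all add: eval_zero left_diff_distrib eval_diff)

interpretation eval: comm_ring_hom "\<lambda>p. eval p c" for c
  by unfold_locales (simp_all add: eval_add eval_mult eval_single[of 0 1, simplified] monomial_value_def)

lemma eval_Var: "eval (Var v) c = c v"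
proof -
  have "monomial_value c (Poly_Mapping.single v 1) = c v"
    unfolding monomial_value_def by (subst prod.remove[of _ v]) (auto simp: lookup_single)
  thus ?thesis by (simp add: Var_def eval_single)
qed

lemma UNIV_8: "(UNIV :: 8 set) = {0, 1, 2, 3, 4, 5, 6, 7}"
proof -
  have "card {0, 1, 2, 3, 4, 5, 6, 7 :: 8} = 8" by simp
  thus ?thesis by (intro card_subset_eq[symmetric]) auto
qed

text \<open>The variables a01, a10, a11, b00, b01, b10, b11 of mpoly7, in the order of their indices
  cidx; the variable of mpoly8 over mpoly7 is a00.\<close>

definition X01 :: mpoly7 where "X01 = [:0, 1:]"
definition X10 :: mpoly7 where "X10 = [:[:0, 1:]:]"
definition X11 :: mpoly7 where "X11 = [:[:[:0, 1:]:]:]"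
definition Y00 :: mpoly7 where "Y00 = [:[:[:[:0, 1:]:]:]:]"
definition Y01 :: mpoly7 where "Y01 = [:[:[:[:[:0, 1:]:]:]:]:]"
definition Y10 :: mpoly7 where "Y10 = [:[:[:[:[:[:0, 1:]:]:]:]:]:]"
definition Y11 :: mpoly7 where "Y11 = [:[:[:[:[:[:[:0, 1:]:]:]:]:]:]:]"

lemma eval7_vars[simp]:
  "eval7 X01 (z1 # z2 # z3 # z4 # z5 # z6 # z7 # zs) = z1"
  "eval7 X10 (z1 # z2 # z3 # z4 # z5 # z6 # z7 # zs) = z2"
  "eval7 X11 (z1 # z2 # z3 # z4 # z5 # z6 # z7 # zs) = z3"
  "eval7 Y00 (z1 # z2 # z3 # z4 # z5 # z6 # z7 # zs) = z4"
  "eval7 Y01 (z1 # z2 # z3 # z4 # z5 # z6 # z7 # zs) = z5"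
  "eval7 Y10 (z1 # z2 # z3 # z4 # z5 # z6 # z7 # zs) = z6"
  "eval7 Y11 (z1 # z2 # z3 # z4 # z5 # z6 # z7 # zs) = z7"
  by (simp_all add: eval7_def X01_def X10_def X11_def Y00_def Y01_def Y10_def Y11_def)

lemma eval8_pCons[simp]: "eval8 (pCons a p) (x # zs) = eval7 a zs + x * eval8 p (x # zs)"
  by (simp add: eval8_def)

lemma eval8_0[simp]: "eval8 0 zs = 0"
  by (simp add: eval8_def)

lemma eval8_smult: "eval8 (smult a p) (x # zs) = eval7 a zs * eval8 p (x # zs)"
proof -
  have "smult a p = [:a:] * p" by simp
  thus ?thesis by (simp only: eval8.hom_mult) simp
qed

definition coeff_list :: "(8 \<Rightarrow> 'a) \<Rightarrow> 'a list" where
  "coeff_list c = [c 0, c 1, c 2, c 3, c 4, c 5, c 6, c 7]"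

definition coeff_vector :: "'a list \<Rightarrow> 8 \<Rightarrow> 'a" where
  "coeff_vector zs v = zs ! (if v = 0 then 0 else if v = 1 then 1 else if v = 2 then 2 else if v = 3 then 3
     else if v = 4 then 4 else if v = 5 then 5 else if v = 6 then 6 else 7)"

lemma coeff_list_coeff_vector: "length zs = 8 \<Longrightarrow> coeff_list (coeff_vector zs) = zs"
  by (simp add: coeff_list_def coeff_vector_def numeral_eq_Suc length_Suc_conv) (auto simp flip: numeral_eq_Suc)

definition to_ipoly :: "mpoly8 \<Rightarrow> ipoly" where
  "to_ipoly p = eval8 p (coeff_list Var)"

interpretation to_ipoly: comm_ring_hom to_ipoly
  unfolding to_ipoly_def by (rule comm_ring_hom_eval8)

lemma eval_to_ipoly: "eval (to_ipoly p) c = eval8 p (coeff_list c)"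
  unfolding to_ipoly_def by (simp add: eval8_map[OF eval.comm_ring_hom_axioms] coeff_list_def eval_Var)

lemma to_ipoly_eq_0_iff: "to_ipoly p = 0 \<longleftrightarrow> p = 0"
proof
  assume "to_ipoly p = 0"
  have "eval8 p ys = 0" if "length ys = 8" for ys :: "complex list"
    using eval_to_ipoly[of p "coeff_vector ys"] \<open>to_ipoly p = 0\<close>
    by (simp add: coeff_list_coeff_vector[OF that] eval_zero)
  thus "p = 0" using detects_zero_eval8 by (simp add: detects_zero_def)
qed simp

lemma Var_in_range_to_ipoly: "Var v \<in> range to_ipoly"
proof -
  have "to_ipoly [:0, 1:] = Var 0"
    and "to_ipoly [:X01:] = Var 1" "to_ipoly [:X10:] = Var 2" "to_ipoly [:X11:] = Var 3"
    and "to_ipoly [:Y00:] = Var 4" "to_ipoly [:Y01:] = Var 5" "to_ipoly [:Y10:] = Var 6"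
    and "to_ipoly [:Y11:] = Var 7"
    by (simp_all add: to_ipoly_def coeff_list_def)
  moreover have "v \<in> {0, 1, 2, 3, 4, 5, 6, 7}" using UNIV_8 by blast
  ultimately show ?thesis by (elim insertE emptyE) (simp_all add: range_eqI[OF sym])
qed

lemma monomial_eq_prod_Var: "Poly_Mapping.single m 1 = (\<Prod>v\<in>UNIV. Var v ^ Poly_Mapping.lookup m v)"
proof -
  have Var_power: "Var v ^ n = Poly_Mapping.single (Poly_Mapping.single v n) 1" for v n
    by (induct n) (simp_all add: Var_def mult_single single_add[symmetric] add.commute)
  have "(\<Prod>v\<in>A. Poly_Mapping.single (f v) (1::int)) = Poly_Mapping.single (\<Sum>v\<in>A. f v) 1"
    if "finite A" for A and f :: "8 \<Rightarrow> 8 \<Rightarrow>\<^sub>0 nat"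
    using that by (induct A rule: finite_induct) (simp_all add: mult_single)
  moreover have "(\<Sum>v\<in>UNIV. Poly_Mapping.single v (Poly_Mapping.lookup m v)) = m"
    by (rule poly_mapping_eqI) (simp add: lookup_sum lookup_single when_def)
  ultimately show ?thesis by (simp add: Var_power)
qed

lemma bij_to_ipoly: "bij to_ipoly"
proof (rule bijI)
  show "inj to_ipoly"
  proof (rule injI)
    fix p q assume "to_ipoly p = to_ipoly q"
    hence "to_ipoly (p - q) = 0" by (simp only: to_ipoly.hom_diff right_minus_eq)
    thus "p = q" by (simp only: to_ipoly_eq_0_iff right_minus_eq)
  qed
  have Var_preimage: "to_ipoly (inv to_ipoly (Var v)) = Var v" for v
    by (rule f_inv_into_f[OF Var_in_range_to_ipoly])
  have "p \<in> range to_ipoly" for p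
    using subset_UNIV[of "Poly_Mapping.keys p"]
  proof (induction p rule: frag_induction)
    case zero
    show ?case using to_ipoly.hom_zero by (rule range_eqI[OF sym])
  next
    case (one m)
    have "to_ipoly (\<Prod>v\<in>UNIV. inv to_ipoly (Var v) ^ Poly_Mapping.lookup m v) = frag_of m"
      by (simp only: to_ipoly.hom_prod to_ipoly.hom_power Var_preimage monomial_eq_prod_Var)
    thus ?case by (rule range_eqI[OF sym])
  next
    case (diff a b)
    then obtain a' b' where "a = to_ipoly a'" "b = to_ipoly b'" by blast
    hence "a - b = to_ipoly (a' - b')" by simp
    thus ?case by blast
  qed
  thus "surj to_ipoly" by blast
qed

section \<open>Irreducibility of the discriminant\<close>

lemma irreducible_quadratic:
  fixes c b l :: "'a::{idom_divide, algebraic_semidom}"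
  assumes "l \<noteq> 0" and "coprime l c" and "\<And>h. b\<^sup>2 - 4 * l * c \<noteq> h\<^sup>2"
  shows "irreducible [:c, b, l:]"
proof (rule irreducibleI)
  let ?q = "[:c, b, l:]"
  have deg: "degree ?q = 2" using \<open>l \<noteq> 0\<close> by simp
  thus "?q \<noteq> 0" by auto
  show "\<not> ?q dvd 1" using deg by (auto simp: is_unit_poly_iff)
  fix P R assume qPR: "?q = P * R"
  hence "P \<noteq> 0" "R \<noteq> 0" using \<open>?q \<noteq> 0\<close> by auto
  hence "degree P + degree R = 2" using qPR deg by (metis degree_mult_eq)
  hence "degree P = 0 \<or> degree R = 0 \<or> degree P = 1 \<and> degree R = 1" by arith
  moreover have "is_unit P" if "?q = P * R" "degree P = 0" for P R
  proof -
    obtain p where P: "P = [:p:]" using \<open>degree P = 0\<close> by (metis degree_eq_zeroE)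
    have "coeff ?q n = p * coeff R n" for n using that(1) P by simp
    hence "p dvd l" "p dvd c" by (metis coeff_pCons_0 coeff_pCons_Suc dvdI)+
    hence "is_unit p" using \<open>coprime l c\<close> coprime_common_divisor by blast
    thus ?thesis using P by (simp add: is_unit_const_poly_iff)
  qed
  moreover have False if "degree P = 1" "degree R = 1"
  proof -
    have P: "P = [:coeff P 0, coeff P 1:]" and R: "R = [:coeff R 0, coeff R 1:]"
      using that by (auto intro!: poly_eqI simp: coeff_pCons coeff_eq_0 split: nat.splits)
    then obtain p0 p1 r0 r1 where "?q = [:p0, p1:] * [:r0, r1:]" using qPR by metis
    hence "c = p0 * r0" "b = p0 * r1 + p1 * r0" "l = p1 * r1" by (simp_all add: algebra_simps)
    hence "b\<^sup>2 - 4 * l * c = (p0 * r1 - p1 * r0)\<^sup>2" by algebra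
    thus False using assms(3) by blast
  qed
  ultimately show "is_unit P \<or> is_unit R" using qPR by (metis mult.commute)
qed

definition cross7 :: mpoly7 where
  "cross7 = X11 * Y00 - X01 * Y10 - X10 * Y01"

definition detB7 :: mpoly7 where
  "detB7 = Y00 * Y11 - Y01 * Y10"

definition disc0 :: mpoly7 where
  "disc0 = cross7\<^sup>2 + 4 * X01 * X10 * detB7"

definition disc1 :: mpoly7 where
  "disc1 = 2 * Y11 * cross7 - 4 * X11 * detB7"

text \<open>L^2 - 4 (a00 a11 - a01 a10) detB7 with L = a00 b11 + cross7, expanded in powers of a00.\<close>

definition disc8 :: mpoly8 where
  "disc8 = [:disc0, disc1, Y11\<^sup>2:]"

text \<open>The two determinant differences in disc_poly coincide; their common value is the
  expression L squared here.\<close>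

definition bilinear_disc :: "'a \<Rightarrow> 'a \<Rightarrow> 'a \<Rightarrow> 'a \<Rightarrow> 'a \<Rightarrow> 'a \<Rightarrow> 'a \<Rightarrow> 'a \<Rightarrow> 'a::comm_ring_1" where
  "bilinear_disc a00 a01 a10 a11 b00 b01 b10 b11 =
     (a00 * b11 + a11 * b00 - a01 * b10 - a10 * b01)\<^sup>2
     - 4 * (a00 * a11 - a01 * a10) * (b00 * b11 - b01 * b10)"

lemma eval8_disc8:
  "eval8 disc8 [a00, a01, a10, a11, b00, b01, b10, b11] = bilinear_disc a00 a01 a10 a11 b00 b01 b10 b11"
  unfolding bilinear_disc_def
  by (simp add: disc8_def disc0_def disc1_def cross7_def detB7_def) (simp add: algebra_simps power2_eq_square)

lemma to_ipoly_disc8: "to_ipoly disc8 = disc_poly"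
  unfolding to_ipoly_def coeff_list_def eval8_disc8
  by (simp add: bilinear_disc_def disc_poly_def det2_def cvar_def cidx_def algebra_simps power2_eq_square)

lemma prime_elem_Y11: "prime_elem Y11"
proof -
  have "prime_elem [:0, 1::int:]" by (rule prime_elem_linear_poly) auto
  thus ?thesis unfolding Y11_def by (simp add: prime_elem_const_poly_iff)
qed

lemma Y11_not_dvd_disc0: "\<not> Y11 dvd disc0"
proof
  assume "Y11 dvd disc0"
  then obtain w where w: "disc0 = Y11 * w" by blast
  let ?z = "[0, 0, 1, 1, 0, 0, 0] :: complex list"
  have "eval7 disc0 ?z = eval7 Y11 ?z * eval7 w ?z" by (simp add: w)
  thus False by (simp add: disc0_def cross7_def detB7_def)
qed

lemma square_ne_linear:
  fixes p :: "'a::idom poly"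
  assumes "c \<noteq> 0"
  shows "p\<^sup>2 \<noteq> [:0, c:]"
proof
  assume sq: "p\<^sup>2 = [:0, c:]"
  hence "p \<noteq> 0" using assms by auto
  hence "degree (p\<^sup>2) = 2 * degree p" by (rule degree_power_eq)
  hence "2 * degree p = 1" using sq assms by simp
  thus False by presburger
qed

lemma disc8_discriminant_not_square: "disc1\<^sup>2 - 4 * Y11\<^sup>2 * disc0 \<noteq> h\<^sup>2"
  (is "?\<Delta> \<noteq> _")
proof
  let ?z = "[1, 1, 0, [:0, 1:], 0, 0, 1] :: int poly list"
  have "eval7 ?\<Delta> ?z = [:0, -16:]"
    by (simp only: disc0_def disc1_def cross7_def detB7_def eval7.hom_diff eval7.hom_mult eval7.hom_power
        eval7.hom_add eval7.hom_numeral eval7_vars) (simp add: numeral_poly)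
  moreover assume "?\<Delta> = h\<^sup>2"
  ultimately have "eval7 h ?z ^ 2 = [:0, -16:]" by (simp only: eval7.hom_power)
  thus False using square_ne_linear[of "-16 :: int"] by simp
qed

lemma irreducible_disc8: "irreducible disc8"
  unfolding disc8_def
proof (rule irreducible_quadratic)
  show "Y11\<^sup>2 \<noteq> 0" using prime_elem_Y11 by auto
  have "coprime Y11 disc0" by (rule prime_elem_imp_coprime[OF prime_elem_Y11 Y11_not_dvd_disc0])
  thus "coprime (Y11\<^sup>2) disc0" by simp
qed (rule disc8_discriminant_not_square)

section \<open>Vanishing at multiple solutions\<close>

lemma eval_disc_poly: "eval disc_poly c = bilinear_disc (c 0) (c 1) (c 2) (c 3) (c 4) (c 5) (c 6) (c 7)"
  by (simp add: to_ipoly_disc8[symmetric] eval_to_ipoly coeff_list_def eval8_disc8)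

lemma bilinear_disc_swap_rows:
  "bilinear_disc a10 a11 a00 a01 b10 b11 b00 b01 = bilinear_disc a00 a01 a10 a11 b00 b01 b10 b11"
  by (simp add: bilinear_disc_def algebra_simps power2_eq_square)

lemma bilinear_disc_swap_columns:
  "bilinear_disc a01 a00 a11 a10 b01 b00 b11 b10 = bilinear_disc a00 a01 a10 a11 b00 b01 b10 b11"
  by (simp add: bilinear_disc_def algebra_simps power2_eq_square)

lemma singular_matrix_left_kernel:
  fixes g0 g1 h0 h1 :: "'a::field"
  assumes "g0 * h1 - g1 * h0 = 0"
  shows "\<exists>l m. (l \<noteq> 0 \<or> m \<noteq> 0) \<and> l * g0 + m * h0 = 0 \<and> l * g1 + m * h1 = 0"
proof -
  consider "g1 \<noteq> 0 \<or> h1 \<noteq> 0" | "g1 = 0" "h1 = 0" "g0 \<noteq> 0 \<or> h0 \<noteq> 0" | "g0 = 0" "g1 = 0" "h0 = 0" "h1 = 0"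
    by blast
  thus ?thesis
  proof cases
    case 1 thus ?thesis using assms
      by (intro exI[of _ h1] exI[of _ "- g1"]) (auto simp: algebra_simps)
  next
    case 2 thus ?thesis
      by (intro exI[of _ h0] exI[of _ "- g0"]) (auto simp: algebra_simps)
  next
    case 3 thus ?thesis by (intro exI[of _ 1] exI[of _ 0]) simp
  qed
qed

text \<open>The hypotheses say that (l, m) is a critical point, hence a double root, of the binary
  quadratic form det (l A + m B) = l^2 det A + l m L + m^2 det B in the coefficient matrices A, B.\<close>

lemma bilinear_disc_eq_0_of_double_root:
  fixes a00 a01 a10 a11 b00 b01 b10 b11 l m :: "'a::idom"
  assumes "l \<noteq> 0 \<or> m \<noteq> 0"
    and "2 * l * (a00 * a11 - a01 * a10) + m * (a00 * b11 + a11 * b00 - a01 * b10 - a10 * b01) = 0"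
    and "l * (a00 * b11 + a11 * b00 - a01 * b10 - a10 * b01) + 2 * m * (b00 * b11 - b01 * b10) = 0"
  shows "bilinear_disc a00 a01 a10 a11 b00 b01 b10 b11 = 0"
proof -
  define L where "L = a00 * b11 + a11 * b00 - a01 * b10 - a10 * b01"
  define dA where "dA = a00 * a11 - a01 * a10"
  define dB where "dB = b00 * b11 - b01 * b10"
  have "(L\<^sup>2 - 4 * dA * dB) * l = L * (l * L + 2 * m * dB) - 2 * dB * (2 * l * dA + m * L)"
    and "(L\<^sup>2 - 4 * dA * dB) * m = L * (2 * l * dA + m * L) - 2 * dA * (l * L + 2 * m * dB)"
    by (simp_all add: algebra_simps power2_eq_square)
  hence "(L\<^sup>2 - 4 * dA * dB) * l = 0" "(L\<^sup>2 - 4 * dA * dB) * m = 0"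
    using assms(2,3) by (simp_all add: L_def dA_def dB_def)
  thus ?thesis using assms(1) by (auto simp: bilinear_disc_def L_def dA_def dB_def)
qed

lemma bilinear_disc_eq_0_at_singular_point:
  fixes a00 a01 a10 a11 b00 b01 b10 b11 s t :: "'a::field"
  assumes F1: "a00 + a01 * t + a10 * s + a11 * (s * t) = 0"
    and F2: "b00 + b01 * t + b10 * s + b11 * (s * t) = 0"
    and J: "(a10 + a11 * t) * (b01 + b11 * s) - (a01 + a11 * s) * (b10 + b11 * t) = 0"
  shows "bilinear_disc a00 a01 a10 a11 b00 b01 b10 b11 = 0"
proof -
  obtain l m where lm: "l \<noteq> 0 \<or> m \<noteq> 0"
    and ds: "l * (a10 + a11 * t) + m * (b10 + b11 * t) = 0"
    and dt: "l * (a01 + a11 * s) + m * (b01 + b11 * s) = 0"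
    using singular_matrix_left_kernel[OF J] by blast
  define F1v where "F1v = a00 + a01 * t + a10 * s + a11 * (s * t)"
  define F2v where "F2v = b00 + b01 * t + b10 * s + b11 * (s * t)"
  define Ds where "Ds = l * (a10 + a11 * t) + m * (b10 + b11 * t)"
  define Dt where "Dt = l * (a01 + a11 * s) + m * (b01 + b11 * s)"
  have "2 * l * (a00 * a11 - a01 * a10) + m * (a00 * b11 + a11 * b00 - a01 * b10 - a10 * b01)
      = a11 * (l * F1v + m * F2v) - (a01 + s * a11) * Ds - (a10 + t * a11) * Dt + (l * a11 + m * b11) * F1v"
    and "l * (a00 * b11 + a11 * b00 - a01 * b10 - a10 * b01) + 2 * m * (b00 * b11 - b01 * b10)
      = b11 * (l * F1v + m * F2v) - (b01 + s * b11) * Ds - (b10 + t * b11) * Dt + (l * a11 + m * b11) * F2v"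
    by (simp_all add: F1v_def F2v_def Ds_def Dt_def algebra_simps)
  moreover have "F1v = 0" "F2v = 0" "Ds = 0" "Dt = 0"
    using F1 F2 ds dt by (simp_all add: F1v_def F2v_def Ds_def Dt_def)
  ultimately show ?thesis by (intro bilinear_disc_eq_0_of_double_root[OF lm]) simp_all
qed

lemma F_expand: "F c k x y = c (cidx k 0 0) * x 0 * y 0 + c (cidx k 0 1) * x 0 * y 1
   + c (cidx k 1 0) * x 1 * y 0 + c (cidx k 1 1) * x 1 * y 1"
  by (simp add: F_def numeral_2_eq_2 lessThan_Suc)

lemma deriv_affine: "deriv (\<lambda>s. u + s * v) x = (v::complex)"
  by (rule DERIV_imp_deriv) (auto intro!: derivative_eq_intros)

lemma deriv_F_chart_left:
  assumes "p < 2"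
  shows "deriv (\<lambda>s'. F c k (chart p s') y) s = c (cidx k (1 - p) 0) * y 0 + c (cidx k (1 - p) 1) * y 1"
proof -
  have "(\<lambda>s'. F c k (chart p s') y) = (\<lambda>s'. (c (cidx k p 0) * y 0 + c (cidx k p 1) * y 1)
     + s' * (c (cidx k (1 - p) 0) * y 0 + c (cidx k (1 - p) 1) * y 1))"
    using assms by (cases p) (auto intro!: ext simp: F_expand chart_def algebra_simps)
  thus ?thesis by (simp add: deriv_affine)
qed

lemma deriv_F_chart_right:
  assumes "q < 2"
  shows "deriv (\<lambda>t'. F c k x (chart q t')) t = c (cidx k 0 (1 - q)) * x 0 + c (cidx k 1 (1 - q)) * x 1"
proof -
  have "(\<lambda>t'. F c k x (chart q t')) = (\<lambda>t'. (c (cidx k 0 q) * x 0 + c (cidx k 1 q) * x 1)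
     + t' * (c (cidx k 0 (1 - q)) * x 0 + c (cidx k 1 (1 - q)) * x 1))"
    using assms by (cases q) (auto intro!: ext simp: F_expand chart_def algebra_simps)
  thus ?thesis by (simp add: deriv_affine)
qed

lemma has_multiple_solution_bilinear_disc:
  assumes "has_multiple_solution c"
  shows "bilinear_disc (c 0) (c 1) (c 2) (c 3) (c 4) (c 5) (c 6) (c 7) = 0"
proof -
  obtain p q s t where pq: "p < 2" "q < 2"
    and F1: "F c 0 (chart p s) (chart q t) = 0" and F2: "F c 1 (chart p s) (chart q t) = 0"
    and J: "deriv (\<lambda>s'. F c 0 (chart p s') (chart q t)) s * deriv (\<lambda>t'. F c 1 (chart p s) (chart q t')) t
       - deriv (\<lambda>t'. F c 0 (chart p s) (chart q t')) t * deriv (\<lambda>s'. F c 1 (chart p s') (chart q t)) s = 0"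
    using assms unfolding has_multiple_solution_def Let_def by blast
  note J' = J[unfolded deriv_F_chart_left[OF pq(1)] deriv_F_chart_right[OF pq(2)]]
  note chart00 = bilinear_disc_eq_0_at_singular_point[of _ _ t _ s]
  have "p = 0 \<or> p = 1" "q = 0 \<or> q = 1" using pq by auto
  thus ?thesis
  proof (elim disjE)
    assume "p = 0" "q = 0"
    thus ?thesis using F1 F2 J'
      by (intro chart00) (auto simp: F_expand chart_def cidx_def algebra_simps)
  next
    assume "p = 0" "q = 1"
    hence "bilinear_disc (c 1) (c 0) (c 3) (c 2) (c 5) (c 4) (c 7) (c 6) = 0" using F1 F2 J'
      by (intro chart00) (auto simp: F_expand chart_def cidx_def algebra_simps)
    thus ?thesis by (simp add: bilinear_disc_swap_columns)
  next
    assume "p = 1" "q = 0"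
    hence "bilinear_disc (c 2) (c 3) (c 0) (c 1) (c 6) (c 7) (c 4) (c 5) = 0" using F1 F2 J'
      by (intro chart00) (auto simp: F_expand chart_def cidx_def algebra_simps)
    thus ?thesis by (simp add: bilinear_disc_swap_rows)
  next
    assume "p = 1" "q = 1"
    hence "bilinear_disc (c 3) (c 2) (c 1) (c 0) (c 7) (c 6) (c 5) (c 4) = 0" using F1 F2 J'
      by (intro chart00) (auto simp: F_expand chart_def cidx_def algebra_simps)
    thus ?thesis by (metis bilinear_disc_swap_rows bilinear_disc_swap_columns)
  qed
qed

lemma vanishes_on_multiple_disc_poly: "vanishes_on_multiple disc_poly"
  unfolding vanishes_on_multiple_def eval_disc_poly using has_multiple_solution_bilinear_disc by blast

lemma has_multiple_solution_chart00:
  assumes "c 0 + c 1 * t + c 2 * s + c 3 * (s * t) = 0"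
    and "c 4 + c 5 * t + c 6 * s + c 7 * (s * t) = 0"
    and "(c 2 + c 3 * t) * (c 5 + c 7 * s) - (c 1 + c 3 * s) * (c 6 + c 7 * t) = 0"
  shows "has_multiple_solution c"
proof -
  let ?f = "\<lambda>k s t. F c k (chart 0 s) (chart 0 t)"
  have "?f 0 s t = 0" "?f 1 s t = 0"
    using assms(1,2) by (simp_all add: F_expand chart_def cidx_def algebra_simps)
  moreover have "deriv (\<lambda>s'. ?f 0 s' t) s * deriv (\<lambda>t'. ?f 1 s t') t
      - deriv (\<lambda>t'. ?f 0 s t') t * deriv (\<lambda>s'. ?f 1 s' t) s = 0"
    unfolding deriv_F_chart_left[of 0, simplified] deriv_F_chart_right[of 0, simplified]
    using assms(3) by (simp add: chart_def cidx_def algebra_simps)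
  ultimately show ?thesis
    unfolding has_multiple_solution_def Let_def by (intro exI[of _ 0] conjI exI) simp_all
qed

text \<open>In the chart (0, 0) the Jacobian of the system is
  jac0 + jac1 s + jac2 t; eliminating t from it and from the second equation leaves the
  quadratic quad2 s^2 + quad1 s + quad0, and the first equation then determines a00, with
  jac2 a00 = val2 s^2 + val1 s + val0.\<close>

locale coeffs7 =
  fixes a01 a10 a11 b00 b01 b10 b11 :: "'a::comm_ring_1"
begin

definition "jac0 = a10 * b01 - a01 * b10"
definition "jac1 = a10 * b11 - a11 * b10"
definition "jac2 = a11 * b01 - a01 * b11"
definition "quad2 = - b11 * jac1"
definition "quad1 = b10 * jac2 - b01 * jac1 - b11 * jac0"
definition "quad0 = b00 * jac2 - b01 * jac0"
definition "quad_disc = quad1\<^sup>2 - 4 * quad2 * quad0"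
definition "val2 = a11 * jac1"
definition "val1 = a01 * jac1 - a10 * jac2 + a11 * jac0"
definition "val0 = a01 * jac0"
definition "separation = val1 * quad2 - val2 * quad1"
definition "genericity = jac2 * quad2 * quad_disc * separation"

lemmas defs = jac0_def jac1_def jac2_def quad2_def quad1_def quad0_def quad_disc_def
  val2_def val1_def val0_def separation_def genericity_def

lemma genericity_hom:
  "comm_ring_hom h \<Longrightarrow> h genericity = coeffs7.genericity (h a01) (h a10) (h a11) (h b00) (h b01) (h b10) (h b11)"
  by (simp add: defs coeffs7.defs comm_ring_hom.hom_add comm_ring_hom.hom_mult comm_ring_hom.hom_diff
      comm_ring_hom.hom_power comm_ring_hom.hom_uminus comm_ring_hom.hom_numeral)

end

locale complex_coeffs7 = coeffs7 a01 a10 a11 b00 b01 b10 b11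
  for a01 a10 a11 b00 b01 b10 b11 :: complex
begin

definition system :: "complex \<Rightarrow> 8 \<Rightarrow> complex" where
  "system a00 = coeff_vector [a00, a01, a10, a11, b00, b01, b10, b11]"

lemma multiple_fibre_of_quad_root:
  assumes "jac2 \<noteq> 0" and "quad2 * s\<^sup>2 + quad1 * s + quad0 = 0"
  obtains a00 where "has_multiple_solution (system a00)" "jac2 * a00 = val2 * s\<^sup>2 + val1 * s + val0"
proof -
  define t where "t = - (jac0 + jac1 * s) / jac2"
  define a00 where "a00 = - (a01 * t + a10 * s + a11 * (s * t))"
  have J: "jac2 * t + jac0 + jac1 * s = 0" using assms(1) by (simp add: t_def field_simps)
  have "jac2 * (b00 + b01 * t + b10 * s + b11 * (s * t))
      = (quad2 * s\<^sup>2 + quad1 * s + quad0) + (b01 + b11 * s) * (jac2 * t + jac0 + jac1 * s)"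
    by (simp add: defs algebra_simps power2_eq_square)
  hence F2: "b00 + b01 * t + b10 * s + b11 * (s * t) = 0" using assms J by simp
  have "(a10 + a11 * t) * (b01 + b11 * s) - (a01 + a11 * s) * (b10 + b11 * t) = jac2 * t + jac0 + jac1 * s"
    by (simp add: defs algebra_simps)
  with J F2 have "has_multiple_solution (system a00)"
    by (intro has_multiple_solution_chart00[where s = s and t = t])
       (simp_all add: system_def coeff_vector_def a00_def algebra_simps)
  moreover have "jac2 * a00 = val2 * s\<^sup>2 + val1 * s + val0 - (a01 + a11 * s) * (jac2 * t + jac0 + jac1 * s)"
    by (simp add: a00_def defs algebra_simps power2_eq_square)
  ultimately show thesis using J that by simp
qed

text \<open>The two roots s1, s2 of the quadratic give values of a00 whose difference is
  sqrt quad_disc * separation / (jac2 quad2^2).\<close>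

lemma two_multiple_fibres:
  assumes "genericity \<noteq> 0"
  obtains x1 x2 where "x1 \<noteq> x2" "has_multiple_solution (system x1)" "has_multiple_solution (system x2)"
proof -
  have nz: "jac2 \<noteq> 0" "quad2 \<noteq> 0" "quad_disc \<noteq> 0" "separation \<noteq> 0"
    using assms by (auto simp: genericity_def)
  define w where "w = csqrt quad_disc"
  have w: "w\<^sup>2 = quad_disc" "w \<noteq> 0" using nz by (auto simp: w_def)
  define s1 where "s1 = (- quad1 + w) / (2 * quad2)"
  define s2 where "s2 = (- quad1 - w) / (2 * quad2)"
  have root: "quad2 * s\<^sup>2 + quad1 * s + quad0 = 0" if "s = s1 \<or> s = s2" for s
  proof -
    have "2 * quad2 * s1 + quad1 = w" "2 * quad2 * s2 + quad1 = - w"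
      using nz by (simp_all add: s1_def s2_def field_simps)
    hence "(2 * quad2 * s + quad1)\<^sup>2 = w\<^sup>2" using that by (metis power2_minus)
    moreover have "4 * quad2 * (quad2 * s\<^sup>2 + quad1 * s + quad0) = (2 * quad2 * s + quad1)\<^sup>2 - quad_disc"
      by (simp add: quad_disc_def algebra_simps power2_eq_square)
    ultimately have "4 * quad2 * (quad2 * s\<^sup>2 + quad1 * s + quad0) = 0" using w by simp
    thus ?thesis using nz by simp
  qed
  obtain x1 where x1: "has_multiple_solution (system x1)" "jac2 * x1 = val2 * s1\<^sup>2 + val1 * s1 + val0"
    using multiple_fibre_of_quad_root[OF nz(1) root] by blast
  obtain x2 where x2: "has_multiple_solution (system x2)" "jac2 * x2 = val2 * s2\<^sup>2 + val1 * s2 + val0"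
    using multiple_fibre_of_quad_root[OF nz(1) root] by blast
  have "jac2 * (x1 - x2) = (s1 - s2) * (val2 * (s1 + s2) + val1)"
    using x1(2) x2(2) by (simp add: algebra_simps power2_eq_square)
  also have "\<dots> = w / quad2 * (separation / quad2)"
    using nz by (simp add: s1_def s2_def separation_def field_simps)
  finally have "x1 \<noteq> x2" using nz w by auto
  thus thesis using x1(1) x2(1) by (rule that)
qed

end

section \<open>Divisibility by the discriminant\<close>

definition genericity7 :: mpoly7 where
  "genericity7 = coeffs7.genericity X01 X10 X11 Y00 Y01 Y10 Y11"

lemma eval7_genericity7: "eval7 genericity7 [z1, z2, z3, z4, z5, z6, z7] = coeffs7.genericity z1 z2 z3 z4 z5 z6 z7"
  unfolding genericity7_def by (simp add: coeffs7.genericity_hom[OF comm_ring_hom_eval7])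

lemma genericity7_ne_0: "genericity7 \<noteq> 0"
proof
  assume "genericity7 = 0"
  hence "eval7 genericity7 [1, 3, 3, 3, -3, -1, -3 :: complex] = 0" by simp
  thus False unfolding eval7_genericity7 by (simp add: coeffs7.defs)
qed

lemma mpoly7_eq_0_of_generic_vanishing:
  assumes "\<And>z. length z = 7 \<Longrightarrow> eval7 genericity7 z \<noteq> 0 \<Longrightarrow> eval7 p z = (0::complex)"
  shows "p = 0"
proof -
  have "eval7 (genericity7 * p) z = (0::complex)" if "length z = 7" for z
    using assms[OF that] by (cases "eval7 genericity7 z = (0::complex)") simp_all
  hence "genericity7 * p = 0" using detects_zero_eval7 unfolding detects_zero_def by blast
  thus ?thesis using genericity7_ne_0 by simp
qed

lemma linear_mpoly8_eq_0_of_vanishing: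
  assumes "degree r \<le> 1" and "\<forall>c. has_multiple_solution c \<longrightarrow> eval8 r (coeff_list c) = (0::complex)"
  shows "r = 0"
proof -
  have r: "r = [:coeff r 0, coeff r 1:]"
    using assms(1) by (auto intro!: poly_eqI simp: coeff_pCons coeff_eq_0 split: nat.splits)
  have "eval7 (coeff r 0) z = 0 \<and> eval7 (coeff r 1) z = (0::complex)"
    if "length z = 7" "eval7 genericity7 z \<noteq> 0" for z
  proof -
    obtain z1 z2 z3 z4 z5 z6 z7 where z: "z = [z1, z2, z3, z4, z5, z6, z7]"
      using \<open>length z = 7\<close> by (auto simp: length_Suc_conv numeral_eq_Suc)
    interpret complex_coeffs7 z1 z2 z3 z4 z5 z6 z7 .
    define A B where "A = eval7 (coeff r 0) z" and "B = eval7 (coeff r 1) z"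
    have "A + x * B = 0" if "has_multiple_solution (system x)" for x
    proof -
      have "eval8 r (x # z) = A + x * B" unfolding A_def B_def by (subst r) simp
      moreover have "eval8 r (x # z) = 0"
        using assms(2) that by (force simp: system_def coeff_list_coeff_vector z)
      ultimately show ?thesis by simp
    qed
    moreover obtain x1 x2 where "x1 \<noteq> x2" "has_multiple_solution (system x1)" "has_multiple_solution (system x2)"
      using two_multiple_fibres \<open>eval7 genericity7 z \<noteq> 0\<close> by (metis z eval7_genericity7)
    ultimately have "A + x1 * B = 0" "A + x2 * B = 0" "x1 \<noteq> x2" by auto
    moreover have "(x1 - x2) * B = (A + x1 * B) - (A + x2 * B)" by (simp add: algebra_simps)
    ultimately show ?thesis by (simp add: A_def B_def)
  qed
  hence "coeff r 0 = 0" "coeff r 1 = 0" by (auto intro: mpoly7_eq_0_of_generic_vanishing)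
  thus "r = 0" using r by simp
qed

lemma disc8_dvd_of_vanishing:
  assumes vanish: "\<forall>c. has_multiple_solution c \<longrightarrow> eval8 q (coeff_list c) = (0::complex)"
  shows "disc8 dvd q"
proof -
  obtain d r where qr: "pseudo_divmod q disc8 = (d, r)" by fastforce
  define k where "k = Suc (degree q) - degree disc8"
  have "Y11 \<noteq> 0" using prime_elem_Y11 by auto
  hence disc8_ne_0: "disc8 \<noteq> 0" and degree_disc8: "degree disc8 = 2" by (simp_all add: disc8_def)
  have "lead_coeff disc8 = Y11\<^sup>2" using \<open>Y11 \<noteq> 0\<close> by (simp add: disc8_def)
  hence div: "smult ((Y11\<^sup>2) ^ k) q = disc8 * d + r" and "r = 0 \<or> degree r < 2"
    using pseudo_divmod[OF disc8_ne_0 qr] degree_disc8 by (simp_all add: k_def)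
  moreover have "eval8 r (coeff_list c) = 0" if "has_multiple_solution c" for c :: "8 \<Rightarrow> complex"
  proof -
    have "eval8 disc8 (coeff_list c) = 0"
      using has_multiple_solution_bilinear_disc[OF that] by (simp add: coeff_list_def eval8_disc8)
    moreover have "eval8 (smult ((Y11\<^sup>2) ^ k) q) (coeff_list c) = 0"
      using vanish that by (simp add: coeff_list_def eval8_smult)
    ultimately show ?thesis using div by (metis add_0 eval8.hom_add eval8.hom_mult mult_zero_left)
  qed
  ultimately have "r = 0" by (intro linear_mpoly8_eq_0_of_vanishing) auto
  moreover have "smult ((Y11\<^sup>2) ^ k) q = [:Y11:] ^ (2 * k) * q"
    by (simp add: poly_const_pow power_mult)
  ultimately have "[:Y11:] ^ (2 * k) * q = disc8 * d" using div by simp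
  moreover have "coprime disc8 ([:Y11:] ^ (2 * k))"
  proof -
    have "\<not> [:Y11:] dvd disc8"
      using Y11_not_dvd_disc0 by (auto simp: disc8_def const_poly_dvd_iff intro!: exI[of _ 0])
    hence "coprime [:Y11:] disc8"
      using prime_elem_Y11 by (intro prime_elem_imp_coprime) (simp_all add: prime_elem_const_poly_iff)
    thus ?thesis by (simp add: coprime_commute)
  qed
  ultimately show ?thesis by (metis coprime_dvd_mult_right_iff dvd_triv_left)
qed

lemma poly_unit_eq_pm1:
  fixes p :: "'a::idom poly"
  assumes "\<And>c::'a. c dvd 1 \<Longrightarrow> c = 1 \<or> c = -1" and "p dvd 1"
  shows "p = 1 \<or> p = -1"
proof -
  obtain c where "p = [:c:]" "c dvd 1" using \<open>p dvd 1\<close> unfolding is_unit_poly_iff by blast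
  thus ?thesis using assms(1)[of c] by (auto simp: one_pCons)
qed

lemma ipoly_unit_eq_pm1:
  assumes "(u::ipoly) dvd 1"
  shows "u = 1 \<or> u = -1"
proof -
  have inv: "to_ipoly (inv to_ipoly u) = u" using bij_to_ipoly by (simp add: bij_is_surj surj_f_inv_f)
  hence "inv to_ipoly u dvd 1"
    using assms comm_ring_hom_bij_unit_iff[OF to_ipoly.comm_ring_hom_axioms bij_to_ipoly] by metis
  hence "inv to_ipoly u = 1 \<or> inv to_ipoly u = -1"
    by (intro poly_unit_eq_pm1; (intro poly_unit_eq_pm1)?) (auto simp: zdvd1_eq abs_if split: if_splits)
  thus ?thesis using inv by auto
qed

lemma irreducible_uminus:
  fixes x :: "'a::comm_ring_1"
  assumes "irreducible x"
  shows "irreducible (- x)"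
proof (rule irreducibleI)
  show "- x \<noteq> 0" "\<not> - x dvd 1" using assms by (auto simp: irreducible_def)
  fix p q assume "- x = p * q"
  hence "x = (- p) * q" by (metis minus_minus mult_minus_left)
  hence "- p dvd 1 \<or> q dvd 1" using irreducibleD[OF assms] by blast
  thus "p dvd 1 \<or> q dvd 1" by simp
qed

lemma irreducible_disc_poly: "irreducible disc_poly"
  using comm_ring_hom_bij_irreducible[OF to_ipoly.comm_ring_hom_axioms bij_to_ipoly irreducible_disc8]
  by (simp add: to_ipoly_disc8)

lemma irreducible_vanishing_eq_disc_poly:
  assumes "irreducible Q" and "vanishes_on_multiple Q"
  shows "Q = disc_poly \<or> Q = - disc_poly"
proof -
  define q where "q = inv to_ipoly Q"
  have Q: "to_ipoly q = Q" using bij_to_ipoly by (simp add: q_def bij_is_surj surj_f_inv_f)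
  have "\<forall>c. has_multiple_solution c \<longrightarrow> eval8 q (coeff_list c) = 0"
    using assms(2) by (simp add: vanishes_on_multiple_def Q[symmetric] eval_to_ipoly)
  then obtain w where "q = disc8 * w" using disc8_dvd_of_vanishing by blast
  hence Qw: "Q = disc_poly * to_ipoly w" using Q by (simp add: to_ipoly_disc8)
  hence "to_ipoly w dvd 1"
    using assms(1) irreducible_disc_poly by (auto simp: irreducible_def)
  thus ?thesis using Qw ipoly_unit_eq_pm1 by fastforce
qed

lemma is_discriminant_iff: "is_discriminant D \<longleftrightarrow> D = disc_poly \<or> D = - disc_poly"
proof
  assume "is_discriminant D"
  thus "D = disc_poly \<or> D = - disc_poly"
    using irreducible_vanishing_eq_disc_poly by (simp add: is_discriminant_def)
next
  assume D: "D = disc_poly \<or> D = - disc_poly"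
  hence "irreducible D"
    using irreducible_disc_poly irreducible_uminus by blast
  moreover have "vanishes_on_multiple D"
    using D vanishes_on_multiple_disc_poly by (auto simp: vanishes_on_multiple_def)
  moreover have "Q = D \<or> Q = - D" if "irreducible Q" "vanishes_on_multiple Q" for Q
    using irreducible_vanishing_eq_disc_poly[OF that] D by auto
  ultimately show "is_discriminant D" unfolding is_discriminant_def by blast
qed

section \<open>The ideal of minors\<close>

lemma ideal_span_base: "g \<in> S \<Longrightarrow> g \<in> ideal_span S"
  unfolding ideal_span_def by (intro CollectI exI[of _ "{g}"] exI[of _ "\<lambda>_. 1"]) simp

lemma ideal_span_mult: "x \<in> ideal_span S \<Longrightarrow> r * x \<in> ideal_span S"
  unfolding ideal_span_def
  by (auto simp: sum_distrib_left mult.assoc intro!: exI[of _ "\<lambda>g. r * _ g"])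

lemma ideal_span_add:
  assumes "x \<in> ideal_span S" "y \<in> ideal_span S"
  shows "x + y \<in> ideal_span S"
proof -
  obtain G h where x: "x = (\<Sum>g\<in>G. h g * g)" "finite G" "G \<subseteq> S"
    using assms(1) unfolding ideal_span_def by blast
  obtain G' h' where y: "y = (\<Sum>g\<in>G'. h' g * g)" "finite G'" "G' \<subseteq> S"
    using assms(2) unfolding ideal_span_def by blast
  define k where "k g = (if g \<in> G then h g else 0) + (if g \<in> G' then h' g else 0)" for g
  have "(\<Sum>g\<in>G \<union> G'. (if g \<in> G then h g else 0) * g) = x"
    "(\<Sum>g\<in>G \<union> G'. (if g \<in> G' then h' g else 0) * g) = y"
    using x y by (auto intro!: sum.mono_neutral_cong_right)
  hence "x + y = (\<Sum>g\<in>G \<union> G'. k g * g)"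
    by (auto simp: k_def sum.distrib[symmetric] distrib_right)
  thus ?thesis using x y unfolding ideal_span_def by blast
qed

lemma mult_mem_ideal_prod: "x \<in> I \<Longrightarrow> y \<in> J \<Longrightarrow> x * y \<in> ideal_prod I J"
  unfolding ideal_prod_def by (rule ideal_span_base) blast

lemma disc_poly_mem_ideal_prod: "disc_poly \<in> ideal_prod (minors_ideal M1) (minors_ideal M2)"
proof -
  let ?minor = "\<lambda>M u v. det2 (M u 0) (M u 1) (M v 0) (M v 1)"
  have minor: "?minor M u v \<in> minors_ideal M" if "u < v" "v < 4" for M u v
    unfolding minors_ideal_def using that by (intro ideal_span_base) blast
  have diff: "?minor M 0 3 + (- 1) * ?minor M 1 2 \<in> minors_ideal M" for M
    unfolding minors_ideal_def by (intro ideal_span_add ideal_span_mult minor[unfolded minors_ideal_def]) simp_all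
  have "disc_poly = (?minor M1 0 3 + (- 1) * ?minor M1 1 2) * (?minor M2 0 3 + (- 1) * ?minor M2 1 2)
      + (- 4 * ?minor M1 0 1) * ?minor M2 2 3"
    by (simp add: disc_poly_def M1_def M2_def det2_def algebra_simps)
  also have "\<dots> \<in> ideal_prod (minors_ideal M1) (minors_ideal M2)"
  proof -
    have "- 4 * ?minor M1 0 1 \<in> minors_ideal M1"
      unfolding minors_ideal_def by (intro ideal_span_mult minor[unfolded minors_ideal_def]) simp_all
    thus ?thesis unfolding ideal_prod_def
      by (intro ideal_span_add mult_mem_ideal_prod[unfolded ideal_prod_def] diff minor) simp_all
  qed
  finally show ?thesis .
qed

theorem mainTheorem3:
  shows "(\<forall>D. is_discriminant D \<longleftrightarrow> D = disc_poly \<or> D = - disc_poly)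
         \<and> disc_poly \<in> ideal_prod (minors_ideal M1) (minors_ideal M2)"
  using is_discriminant_iff disc_poly_mem_ideal_prod by blast

end
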